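(* Let $X$ be a real Banach space, $A$ a non-empty subset of $X$, and $F_1,F_2$ non-empty closed bounded subsets of $X$ such that $Q_{F_1}(x)=Q_{F_2}(x)$ for each $x\in A$. If $F_1,F_2$ are USUR (respectively SUR, uniquely remotal) on $A$, then $F_1\cup F_2$ is USUR (respectively SUR, uniquely remotal) on $A$.
   Context: $B_X$ is the closed unit ball. For non-empty bounded $F$, $x\in X$, $\delta\ge0$: $r(F,x)=\sup_{y\in F}\|x-y\|$, $Q_F(x,\delta)=\{y\in F:\|x-y\|\ge r(F,x)-\delta\}$, $Q_F(x)=Q_F(x,0)$. On a set $A$, $F$ is: uniquely remotal if $Q_F(x)$ is a singleton for each $x\in A$; SUR if uniquely remotal and for every $x\in A$ and $\epsilon>0$ there is $\delta>0$ with $Q_F(x,\delta)\subseteq Q_F(x)+\epsilon B_X$; USUR if uniquely remotal and for every $\epsilon>0$ there is $\delta>0$ with $Q_F(x,\delta)\subseteq Q_F(x)+\epsilon B_X$ for all $x\in A$. *)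

theory Defs
  imports "HOL-Analysis.Analysis"
begin

definition farthest_radius :: "'a::real_normed_vector set \<Rightarrow> 'a \<Rightarrow> real" where
  "farthest_radius F x = (SUP y\<in>F. norm (x - y))"

definition Qset :: "'a::real_normed_vector set \<Rightarrow> 'a \<Rightarrow> real \<Rightarrow> 'a set" where
  "Qset F x \<delta> = {y \<in> F. norm (x - y) \<ge> farthest_radius F x - \<delta>}"

abbreviation Q0 :: "'a::real_normed_vector set \<Rightarrow> 'a \<Rightarrow> 'a set" where
  "Q0 F x \<equiv> Qset F x 0"

definition enlarge :: "'a::real_normed_vector set \<Rightarrow> real \<Rightarrow> 'a set" where
  "enlarge S \<epsilon> = {s + \<epsilon> *\<^sub>R b | s b. s \<in> S \<and> b \<in> cball 0 1}"

definition uniquely_remotal_on :: "'a::real_normed_vector set \<Rightarrow> 'a set \<Rightarrow> bool" where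
  "uniquely_remotal_on F A \<longleftrightarrow> (\<forall>x\<in>A. \<exists>q. Q0 F x = {q})"

definition SUR_on :: "'a::real_normed_vector set \<Rightarrow> 'a set \<Rightarrow> bool" where
  "SUR_on F A \<longleftrightarrow> uniquely_remotal_on F A \<and>
     (\<forall>x\<in>A. \<forall>\<epsilon>>0. \<exists>\<delta>>0. Qset F x \<delta> \<subseteq> enlarge (Q0 F x) \<epsilon>)"

definition USUR_on :: "'a::real_normed_vector set \<Rightarrow> 'a set \<Rightarrow> bool" where
  "USUR_on F A \<longleftrightarrow> uniquely_remotal_on F A \<and>
     (\<forall>\<epsilon>>0. \<exists>\<delta>>0. \<forall>x\<in>A. Qset F x \<delta> \<subseteq> enlarge (Q0 F x) \<epsilon>)"

end

theory Submission
  imports Defs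
begin

text \<open>If \<open>x\<close> has the same farthest points \<open>Q(x)\<close> in \<open>F1\<close> and \<open>F2\<close>, then \<open>x\<close> has the same
  farthest distance from \<open>F1\<close>, \<open>F2\<close> and \<open>F1 \<union> F2\<close>, so the \<open>\<delta>\<close>-farthest set of the union is
  the union of the \<open>\<delta>\<close>-farthest sets. Taking the smaller of the two \<open>\<delta>\<close>'s supplied by \<open>F1\<close>
  and \<open>F2\<close> therefore transfers (uniform) strong unique remotality to \<open>F1 \<union> F2\<close>.\<close>

lemma bdd_above_norm_diff:
  assumes "bounded F"
  shows "bdd_above ((\<lambda>y. norm (x - y)) ` F)"
  using bounded_translation[of "uminus ` F" x] assms
  by (intro bounded_imp_bdd_above) (simp add: bounded_norm_comp image_image)

lemma norm_diff_le_farthest_radius: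
  assumes "bounded F" "y \<in> F"
  shows "norm (x - y) \<le> farthest_radius F x"
  unfolding farthest_radius_def using bdd_above_norm_diff[OF assms(1)] assms(2)
  by (rule cSUP_upper2) auto

lemma farthest_radius_Un:
  assumes "bounded F1" "F1 \<noteq> {}" "bounded F2" "F2 \<noteq> {}"
  shows "farthest_radius (F1 \<union> F2) x = max (farthest_radius F1 x) (farthest_radius F2 x)"
  unfolding farthest_radius_def
  using cSUP_union[OF assms(2) bdd_above_norm_diff[OF assms(1)] assms(4) bdd_above_norm_diff[OF assms(3)]]
  by (simp add: sup_max)

lemma farthest_radius_eq_norm_Q0:
  assumes "bounded F" "q \<in> Q0 F x"
  shows "farthest_radius F x = norm (x - q)"
  using assms norm_diff_le_farthest_radius[OF assms(1), of q x] unfolding Qset_def by auto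

lemma Qset_Un_common_farthest:
  assumes "bounded F1" "bounded F2" "Q0 F1 x = Q0 F2 x" "Q0 F1 x \<noteq> {}"
  shows "Qset (F1 \<union> F2) x \<delta> = Qset F1 x \<delta> \<union> Qset F2 x \<delta>"
proof -
  obtain q where q1: "q \<in> Q0 F1 x" and q2: "q \<in> Q0 F2 x"
    using assms(3,4) by auto
  then have "F1 \<noteq> {}" "F2 \<noteq> {}"
    unfolding Qset_def by auto
  moreover have "farthest_radius F1 x = norm (x - q)" "farthest_radius F2 x = norm (x - q)"
    using farthest_radius_eq_norm_Q0 assms(1,2) q1 q2 by blast+
  ultimately have "farthest_radius (F1 \<union> F2) x = norm (x - q)"
    using farthest_radius_Un[OF assms(1) _ assms(2)] by simp
  with \<open>farthest_radius F1 x = norm (x - q)\<close> \<open>farthest_radius F2 x = norm (x - q)\<close> show ?thesis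
    unfolding Qset_def by auto
qed

lemma Qset_mono: "\<delta> \<le> \<delta>' \<Longrightarrow> Qset F x \<delta> \<subseteq> Qset F x \<delta>'"
  unfolding Qset_def by auto

lemma Qset_Un_subset_enlarge:
  assumes "bounded F1" "bounded F2" "Q0 F1 x = Q0 F2 x" "Q0 F1 x \<noteq> {}"
    and "Qset F1 x \<delta>1 \<subseteq> enlarge (Q0 F1 x) \<epsilon>" "Qset F2 x \<delta>2 \<subseteq> enlarge (Q0 F2 x) \<epsilon>"
  shows "Qset (F1 \<union> F2) x (min \<delta>1 \<delta>2) \<subseteq> enlarge (Q0 (F1 \<union> F2) x) \<epsilon>"
proof -
  have "Qset F1 x (min \<delta>1 \<delta>2) \<union> Qset F2 x (min \<delta>1 \<delta>2) \<subseteq> enlarge (Q0 F1 x) \<epsilon>"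
    using assms(3,5,6) Qset_mono[of "min \<delta>1 \<delta>2" \<delta>1 F1 x] Qset_mono[of "min \<delta>1 \<delta>2" \<delta>2 F2 x]
    by auto
  then show ?thesis
    using Qset_Un_common_farthest[OF assms(1-4)] assms(3) by simp
qed

lemma uniquely_remotal_on_Un:
  assumes "bounded F1" "bounded F2" "\<forall>x\<in>A. Q0 F1 x = Q0 F2 x" "uniquely_remotal_on F1 A"
  shows "uniquely_remotal_on (F1 \<union> F2) A"
  unfolding uniquely_remotal_on_def
proof
  fix x assume "x \<in> A"
  then obtain q where "Q0 F1 x = {q}" "Q0 F2 x = {q}"
    using assms(3,4) unfolding uniquely_remotal_on_def by metis
  then show "\<exists>q. Q0 (F1 \<union> F2) x = {q}"
    using Qset_Un_common_farthest[OF assms(1,2)] by auto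
qed

lemma SUR_on_Un:
  assumes "bounded F1" "bounded F2" "\<forall>x\<in>A. Q0 F1 x = Q0 F2 x"
    and "SUR_on F1 A" "SUR_on F2 A"
  shows "SUR_on (F1 \<union> F2) A"
  unfolding SUR_on_def
proof (intro conjI ballI allI impI)
  have unique: "uniquely_remotal_on F1 A"
    using assms(4) unfolding SUR_on_def by blast
  then show "uniquely_remotal_on (F1 \<union> F2) A"
    using uniquely_remotal_on_Un assms(1-3) by blast
  fix x :: 'a and \<epsilon> :: real
  assume "x \<in> A" "\<epsilon> > 0"
  obtain \<delta>1 where "\<delta>1 > 0" "Qset F1 x \<delta>1 \<subseteq> enlarge (Q0 F1 x) \<epsilon>"
    using assms(4) \<open>x \<in> A\<close> \<open>\<epsilon> > 0\<close> unfolding SUR_on_def by blast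
  moreover obtain \<delta>2 where "\<delta>2 > 0" "Qset F2 x \<delta>2 \<subseteq> enlarge (Q0 F2 x) \<epsilon>"
    using assms(5) \<open>x \<in> A\<close> \<open>\<epsilon> > 0\<close> unfolding SUR_on_def by blast
  moreover have "Q0 F1 x = Q0 F2 x" "Q0 F1 x \<noteq> {}"
    using \<open>x \<in> A\<close> assms(3) unique unfolding uniquely_remotal_on_def by auto
  ultimately show "\<exists>\<delta>>0. Qset (F1 \<union> F2) x \<delta> \<subseteq> enlarge (Q0 (F1 \<union> F2) x) \<epsilon>"
    using Qset_Un_subset_enlarge[OF assms(1,2)] by (intro exI[of _ "min \<delta>1 \<delta>2"]) simp
qed

lemma USUR_on_Un:
  assumes "bounded F1" "bounded F2" "\<forall>x\<in>A. Q0 F1 x = Q0 F2 x"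
    and "USUR_on F1 A" "USUR_on F2 A"
  shows "USUR_on (F1 \<union> F2) A"
  unfolding USUR_on_def
proof (intro conjI allI impI)
  have unique: "uniquely_remotal_on F1 A"
    using assms(4) unfolding USUR_on_def by blast
  then show "uniquely_remotal_on (F1 \<union> F2) A"
    using uniquely_remotal_on_Un assms(1-3) by blast
  fix \<epsilon> :: real
  assume "\<epsilon> > 0"
  obtain \<delta>1 where "\<delta>1 > 0" and \<delta>1: "\<forall>x\<in>A. Qset F1 x \<delta>1 \<subseteq> enlarge (Q0 F1 x) \<epsilon>"
    using assms(4) \<open>\<epsilon> > 0\<close> unfolding USUR_on_def by blast
  obtain \<delta>2 where "\<delta>2 > 0" and \<delta>2: "\<forall>x\<in>A. Qset F2 x \<delta>2 \<subseteq> enlarge (Q0 F2 x) \<epsilon>"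
    using assms(5) \<open>\<epsilon> > 0\<close> unfolding USUR_on_def by blast
  have "Qset (F1 \<union> F2) x (min \<delta>1 \<delta>2) \<subseteq> enlarge (Q0 (F1 \<union> F2) x) \<epsilon>" if "x \<in> A" for x
  proof (rule Qset_Un_subset_enlarge[OF assms(1,2)])
    show "Q0 F1 x = Q0 F2 x" "Q0 F1 x \<noteq> {}"
      using that assms(3) unique unfolding uniquely_remotal_on_def by auto
  qed (use that \<delta>1 \<delta>2 in blast)+
  with \<open>\<delta>1 > 0\<close> \<open>\<delta>2 > 0\<close>
  show "\<exists>\<delta>>0. \<forall>x\<in>A. Qset (F1 \<union> F2) x \<delta> \<subseteq> enlarge (Q0 (F1 \<union> F2) x) \<epsilon>"
    by (intro exI[of _ "min \<delta>1 \<delta>2"]) simp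
qed

theorem corollary2p11:
  fixes A F1 F2 :: "'a::banach set"
  assumes "A \<noteq> {}"
    and "F1 \<noteq> {}" "closed F1" "bounded F1"
    and "F2 \<noteq> {}" "closed F2" "bounded F2"
    and "\<forall>x\<in>A. Q0 F1 x = Q0 F2 x"
  shows "(USUR_on F1 A \<and> USUR_on F2 A \<longrightarrow> USUR_on (F1 \<union> F2) A)
       \<and> (SUR_on F1 A \<and> SUR_on F2 A \<longrightarrow> SUR_on (F1 \<union> F2) A)
       \<and> (uniquely_remotal_on F1 A \<and> uniquely_remotal_on F2 A \<longrightarrow>
            uniquely_remotal_on (F1 \<union> F2) A)"
  using USUR_on_Un[OF assms(4,7,8)] SUR_on_Un[OF assms(4,7,8)]
    uniquely_remotal_on_Un[OF assms(4,7,8)] by blast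

end
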